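(* Let $\delta\in(0,1]$, $p\in[0,1]$ and $n\in\mathbb{N}$ with $p\ge\frac{16\ln(2/\delta)}{n}$, and let $$\varepsilon=\log\left(1+\frac{\sqrt{64\log(4/\delta)}}{\sqrt{pn}}+\frac{8}{pn}\right).$$ Let $C\sim\mathrm{Bin}(n-1,p)$ and, conditionally on $C$, $A\sim\mathrm{Bin}(C,1/2)$. Let $P=(A+1,C-A)$ and $Q=(A,C-A+1)$. Then $$\Pr_{z\sim P}\left(-\varepsilon\le\ln\frac{\Pr(P=z)}{\Pr(Q=z)}\le\varepsilon\right)\ge1-\delta\quad\text{and}\quad\Pr_{z\sim Q}\left(-\varepsilon\le\ln\frac{\Pr(P=z)}{\Pr(Q=z)}\le\varepsilon\right)\ge1-\delta.$$ In particular, $P$ and $Q$ are $(\varepsilon,\delta)$-indistinguishable.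
   Context: Two random variables $P,Q$ on the same space are $(\varepsilon,\delta)$-indistinguishable if for every event $E$, $e^{-\varepsilon}(\Pr(Q\in E)-\delta)\le\Pr(P\in E)\le e^{\varepsilon}\Pr(Q\in E)+\delta$. $\mathrm{Bin}(m,p)$ is the binomial distribution. *)

theory Defs
  imports "HOL-Probability.Probability"
begin

definition indist :: "real \<Rightarrow> real \<Rightarrow> 'a pmf \<Rightarrow> 'a pmf \<Rightarrow> bool" where
  "indist \<epsilon> \<delta> P Q \<longleftrightarrow> (\<forall>E.
      exp (-\<epsilon>) * (measure_pmf.prob Q E - \<delta>) \<le> measure_pmf.prob P E \<and>
      measure_pmf.prob P E \<le> exp \<epsilon> * measure_pmf.prob Q E + \<delta>)"

definition loss_bounded :: "real \<Rightarrow> 'a pmf \<Rightarrow> 'a pmf \<Rightarrow> 'a set" where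
  "loss_bounded \<epsilon> P Q = {z. pmf P z > 0 \<and> pmf Q z > 0 \<and>
      - \<epsilon> \<le> ln (pmf P z / pmf Q z) \<and> ln (pmf P z / pmf Q z) \<le> \<epsilon>}"

definition AC_pmf :: "nat \<Rightarrow> real \<Rightarrow> (nat \<times> nat) pmf" where
  "AC_pmf n p = binomial_pmf (n - 1) p \<bind> (\<lambda>c. map_pmf (\<lambda>a. (a, c)) (binomial_pmf c (1/2)))"

definition P_pmf :: "nat \<Rightarrow> real \<Rightarrow> (nat \<times> nat) pmf" where
  "P_pmf n p = map_pmf (\<lambda>(a, c). (a + 1, c - a)) (AC_pmf n p)"

definition Q_pmf :: "nat \<Rightarrow> real \<Rightarrow> (nat \<times> nat) pmf" where
  "Q_pmf n p = map_pmf (\<lambda>(a, c). (a, c - a + 1)) (AC_pmf n p)"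

end

theory Submission
  imports Defs
begin

(*
  For x, y \<ge> 1 the identity (c choose x - 1) * y = (c choose x) * x with c = x + y - 1 gives
  Pr(P = (x, y)) * y = Pr(Q = (x, y)) * x, so the privacy loss at (x, y) is ln (x / y).
  Call a split of C into A heads and C - A tails balanced if the outputs of both P and Q
  then have coordinate ratio within [1 / \<alpha>, \<alpha>], where \<alpha> = 1 + 8 sqrt (ln (4 / \<delta>) / (p n)) \<le> exp \<epsilon>.
  Given C = c, Hoeffding's inequality bounds the probability of an unbalanced split by
  2 exp (4 \<gamma> \<rho> - 2 \<gamma>\<^sup>2 c); averaging over C with the moment generating function of
  Bin(n - 1, p) and using p n \<ge> 8 ln (4 / \<delta>) brings this down to \<delta>. Outside an event of
  probability \<delta> the two densities are thus within a factor exp \<epsilon> of each other, which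
  also yields the indistinguishability.
*)

lemma pmf_map_inj_on:
  assumes "inj_on f A" "set_pmf M \<subseteq> A" "x \<in> A"
  shows "pmf (map_pmf f M) (f x) = pmf M x"
proof (cases "x \<in> set_pmf M")
  case True
  have "inj_on f (set_pmf M)"
    using assms(1,2) by (rule inj_on_subset)
  then show ?thesis
    using True by (rule pmf_map_inj)
next
  case False
  have "f x \<notin> f ` set_pmf M"
    using inj_on_image_mem_iff[OF assms(1,3,2)] False by simp
  then show ?thesis
    using False by (simp add: pmf_map_outside set_pmf_iff)
qed

lemma measure_pmf_prob_le_map_pmf:
  assumes "\<And>x. x \<in> A \<Longrightarrow> x \<in> set_pmf M \<Longrightarrow> f x \<in> B"
  shows "measure_pmf.prob M A \<le> measure_pmf.prob (map_pmf f M) B"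
proof -
  have "measure_pmf.prob M A = measure_pmf.prob M (A \<inter> set_pmf M)"
    by (simp add: measure_Int_set_pmf)
  also have "\<dots> \<le> measure_pmf.prob M (f -` B)"
    using assms by (intro measure_pmf.finite_measure_mono) auto
  finally show ?thesis
    by simp
qed

lemma measure_pmf_prob_le_scaled:
  assumes "\<And>z. z \<in> A \<Longrightarrow> pmf M z \<le> c * pmf N z" "c \<ge> 0"
  shows "measure_pmf.prob M A \<le> c * measure_pmf.prob N A"
proof -
  have "emeasure (measure_pmf M) A = (\<integral>\<^sup>+x. ennreal (pmf M x) \<partial>count_space A)"
    by (simp add: nn_integral_pmf)
  also have "\<dots> \<le> (\<integral>\<^sup>+x. ennreal c * ennreal (pmf N x) \<partial>count_space A)"
    using assms by (intro nn_integral_mono) (auto simp flip: ennreal_mult intro: ennreal_leI)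
  also have "\<dots> = ennreal (c * measure_pmf.prob N A)"
    using assms(2) by (simp add: nn_integral_cmult nn_integral_pmf measure_pmf.emeasure_eq_measure ennreal_mult)
  finally show ?thesis
    using assms(2) by (simp add: measure_pmf.emeasure_eq_measure)
qed

lemma measure_pmf_prob_le_scaled_plus:
  assumes "measure_pmf.prob M S \<ge> 1 - \<delta>" "\<And>z. z \<in> S \<Longrightarrow> pmf M z \<le> c * pmf N z" "c \<ge> 0"
  shows "measure_pmf.prob M E \<le> c * measure_pmf.prob N E + \<delta>"
proof -
  have "measure_pmf.prob M E \<le> measure_pmf.prob M (E \<inter> S) + measure_pmf.prob M (- S)"
    by (rule order_trans[OF measure_pmf.finite_measure_mono measure_subadditive])
       (auto simp: measure_pmf.emeasure_eq_measure)
  also have "measure_pmf.prob M (- S) \<le> \<delta>"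
    using assms(1) measure_pmf.prob_compl[of S M] by (simp add: Compl_eq_Diff_UNIV)
  also have "measure_pmf.prob M (E \<inter> S) \<le> c * measure_pmf.prob N (E \<inter> S)"
    using assms(2,3) by (intro measure_pmf_prob_le_scaled) auto
  also have "\<dots> \<le> c * measure_pmf.prob N E"
    using assms(3) by (intro mult_left_mono measure_pmf.finite_measure_mono) auto
  finally show ?thesis
    by simp
qed

lemma measure_bind_pmf_le_expectation:
  fixes h :: "'a \<Rightarrow> real"
  assumes "\<And>x. x \<in> set_pmf M \<Longrightarrow> measure_pmf.prob (K x) A \<le> h x" "integrable M h"
  shows "measure_pmf.prob (bind_pmf M K) A \<le> measure_pmf.expectation M h"
proof -
  have h_nonneg: "AE x in M. 0 \<le> h x"
    using assms(1) by (auto intro: order_trans[OF measure_nonneg] simp: AE_measure_pmf_iff)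
  have "emeasure (bind_pmf M K) A = (\<integral>\<^sup>+x. emeasure (K x) A \<partial>M)"
    by simp
  also have "\<dots> \<le> (\<integral>\<^sup>+x. ennreal (h x) \<partial>M)"
    using assms(1) by (intro nn_integral_mono_AE)
      (auto simp: AE_measure_pmf_iff measure_pmf.emeasure_eq_measure intro: ennreal_leI)
  also have "\<dots> = ennreal (measure_pmf.expectation M h)"
    using assms(2) h_nonneg by (rule nn_integral_eq_integral)
  finally show ?thesis
    using h_nonneg by (simp add: measure_pmf.emeasure_eq_measure integral_nonneg_AE)
qed

lemma mem_loss_bounded_iff:
  "z \<in> loss_bounded \<epsilon> P Q \<longleftrightarrow> pmf P z > 0 \<and> pmf Q z > 0 \<and>
     pmf P z \<le> exp \<epsilon> * pmf Q z \<and> pmf Q z \<le> exp \<epsilon> * pmf P z"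
proof -
  have "- \<epsilon> \<le> ln (a / b) \<longleftrightarrow> b \<le> exp \<epsilon> * a" "ln (a / b) \<le> \<epsilon> \<longleftrightarrow> a \<le> exp \<epsilon> * b"
    if "a > 0" "b > 0" for a b :: real
  proof -
    have "- \<epsilon> \<le> ln (a / b) \<longleftrightarrow> exp (- \<epsilon>) \<le> a / b"
      using that by (simp add: ln_ge_iff)
    then show "- \<epsilon> \<le> ln (a / b) \<longleftrightarrow> b \<le> exp \<epsilon> * a"
      using that by (simp add: exp_minus inverse_eq_divide divide_le_eq mult.commute)
    have "ln (a / b) \<le> \<epsilon> \<longleftrightarrow> a / b \<le> exp \<epsilon>"
      using that by (metis exp_le_cancel_iff exp_ln divide_pos_pos)
    then show "ln (a / b) \<le> \<epsilon> \<longleftrightarrow> a \<le> exp \<epsilon> * b"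
      using that by (simp add: divide_le_eq mult.commute)
  qed
  then show ?thesis
    unfolding loss_bounded_def by auto
qed

lemma indist_if_loss_bounded:
  assumes "measure_pmf.prob P (loss_bounded \<epsilon> P Q) \<ge> 1 - \<delta>"
    and "measure_pmf.prob Q (loss_bounded \<epsilon> P Q) \<ge> 1 - \<delta>"
  shows "indist \<epsilon> \<delta> P Q"
  unfolding indist_def
proof
  fix E
  have "measure_pmf.prob P E \<le> exp \<epsilon> * measure_pmf.prob Q E + \<delta>"
    using assms(1) by (rule measure_pmf_prob_le_scaled_plus) (auto simp: mem_loss_bounded_iff)
  moreover have "measure_pmf.prob Q E \<le> exp \<epsilon> * measure_pmf.prob P E + \<delta>"
    using assms(2) by (rule measure_pmf_prob_le_scaled_plus) (auto simp: mem_loss_bounded_iff)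
  then have "exp (-\<epsilon>) * (measure_pmf.prob Q E - \<delta>) \<le> measure_pmf.prob P E"
    by (simp add: exp_minus inverse_eq_divide divide_le_eq mult.commute)
  ultimately show "exp (-\<epsilon>) * (measure_pmf.prob Q E - \<delta>) \<le> measure_pmf.prob P E \<and>
      measure_pmf.prob P E \<le> exp \<epsilon> * measure_pmf.prob Q E + \<delta>"
    by simp
qed

lemma pmf_binomial_pmf_Suc_mult:
  assumes "p \<in> {0..1}"
  shows "pmf (binomial_pmf c p) a * real (c - a) * p =
    pmf (binomial_pmf c p) (Suc a) * real (Suc a) * (1 - p)"
proof (cases "a < c")
  case True
  have "real (c choose a) * real (c - a) = real (c choose Suc a) * real (Suc a)"
    using binomial_absorb_comp[of c a] binomial_absorption[of a c]
    by (metis mult.commute of_nat_mult)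
  moreover have "(1 - p) ^ (c - a) = (1 - p) ^ (c - Suc a) * (1 - p)"
    using True by (simp flip: power_Suc2 add: Suc_diff_Suc)
  ultimately show ?thesis
    using assms by (simp add: ac_simps)
next
  case False
  then show ?thesis
    using assms by simp
qed

lemma expectation_binomial_pmf_power:
  fixes t :: real
  assumes "p \<in> {0..1}"
  shows "measure_pmf.expectation (binomial_pmf m p) (\<lambda>k. t ^ k) = (1 - p + p * t) ^ m"
  using assms binomial_ring[of "p * t" "1 - p" m]
  by (simp add: expectation_binomial_pmf' power_mult_distrib ac_simps)

lemma prob_binomial_pmf_abs_ge_affine:
  fixes \<gamma> \<rho> :: real
  assumes "p \<in> {0..1}" "\<gamma> \<ge> 0" "\<rho> \<ge> 0"
  shows "measure_pmf.prob (binomial_pmf c p) {a. \<bar>real a - c * p\<bar> \<ge> \<gamma> * c - \<rho>}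
    \<le> 2 * exp (4 * \<gamma> * \<rho> - 2 * \<gamma>\<^sup>2 * c)"
proof (cases "c > 0 \<and> \<gamma> * c - \<rho> \<ge> 0")
  case True
  interpret binomial_distribution c p
    using assms(1) by unfold_locales
  have "-2 * (\<gamma> * c - \<rho>)\<^sup>2 / c = 4 * \<gamma> * \<rho> - 2 * \<gamma>\<^sup>2 * c - 2 * \<rho>\<^sup>2 / c"
    using True by (simp add: field_simps power2_eq_square)
  then have "exp (-2 * (\<gamma> * c - \<rho>)\<^sup>2 / c) \<le> exp (4 * \<gamma> * \<rho> - 2 * \<gamma>\<^sup>2 * c)"
    by simp
  with prob_abs_ge[of "\<gamma> * c - \<rho>"] True show ?thesis
    by linarith
next
  case False
  then have "\<gamma> * c \<le> \<rho>"
    using assms by auto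
  then have "\<gamma> * (\<gamma> * c) \<le> \<gamma> * \<rho>"
    using assms by (intro mult_left_mono)
  moreover have "0 \<le> \<gamma> * \<rho>"
    using assms by simp
  ultimately have "1 \<le> exp (4 * \<gamma> * \<rho> - 2 * \<gamma>\<^sup>2 * c)"
    by (simp add: power2_eq_square mult.assoc)
  then show ?thesis
    by (intro order_trans[OF measure_pmf.prob_le_1]) linarith
qed

lemma set_pmf_AC_pmf: "set_pmf (AC_pmf n p) \<subseteq> {(a, c). a \<le> c}"
  unfolding AC_pmf_def by (auto simp: set_pmf_binomial_eq split: if_splits)

lemma pmf_AC_pmf:
  "pmf (AC_pmf n p) (a, c) = pmf (binomial_pmf (n - 1) p) c * pmf (binomial_pmf c (1/2)) a"
proof -
  have inner: "pmf (map_pmf (\<lambda>a'. (a', c')) (binomial_pmf c' (1/2))) (a, c) =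
      (if c' = c then pmf (binomial_pmf c (1/2)) a else 0)" for c'
    using pmf_map_inj'[of "\<lambda>a'. (a', c)" "binomial_pmf c (1/2)" a]
    by (auto simp: inj_on_def simp del: pmf_binomial intro!: pmf_map_outside)
  have "pmf (AC_pmf n p) (a, c) =
      (\<integral>c'. (if c' = c then pmf (binomial_pmf c (1/2)) a else 0) \<partial>binomial_pmf (n - 1) p)"
    unfolding AC_pmf_def pmf_bind inner ..
  also have "\<dots> = pmf (binomial_pmf (n - 1) p) c * pmf (binomial_pmf c (1/2)) a"
    by (subst integral_measure_pmf_real[where A = "{c}"]) (auto split: if_splits)
  finally show ?thesis .
qed

lemma pmf_P_pmf:
  assumes "x \<ge> 1"
  shows "pmf (P_pmf n p) (x, y) = pmf (AC_pmf n p) (x - 1, x + y - 1)"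
proof -
  let ?f = "\<lambda>(a, c). (a + 1, c - a) :: nat \<times> nat"
  have "inj_on ?f {(a, c). a \<le> c}"
    by (rule inj_onI) auto
  then have "pmf (P_pmf n p) (?f (x - 1, x + y - 1)) = pmf (AC_pmf n p) (x - 1, x + y - 1)"
    unfolding P_pmf_def by (rule pmf_map_inj_on[OF _ set_pmf_AC_pmf]) simp
  moreover have "?f (x - 1, x + y - 1) = (x, y)"
    using assms by simp
  ultimately show ?thesis
    by simp
qed

lemma pmf_Q_pmf:
  assumes "y \<ge> 1"
  shows "pmf (Q_pmf n p) (x, y) = pmf (AC_pmf n p) (x, x + y - 1)"
proof -
  let ?f = "\<lambda>(a, c). (a, c - a + 1) :: nat \<times> nat"
  have "inj_on ?f {(a, c). a \<le> c}"
    by (rule inj_onI) auto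
  then have "pmf (Q_pmf n p) (?f (x, x + y - 1)) = pmf (AC_pmf n p) (x, x + y - 1)"
    unfolding Q_pmf_def by (rule pmf_map_inj_on[OF _ set_pmf_AC_pmf]) (use assms in simp)
  moreover have "?f (x, x + y - 1) = (x, y)"
    using assms by simp
  ultimately show ?thesis
    by simp
qed

lemma pmf_P_pmf_mult_eq_pmf_Q_pmf_mult:
  assumes "x \<ge> 1" "y \<ge> 1"
  shows "pmf (P_pmf n p) (x, y) * y = pmf (Q_pmf n p) (x, y) * x"
proof -
  have "pmf (binomial_pmf (x + y - 1) (1/2)) (x - 1) * y = pmf (binomial_pmf (x + y - 1) (1/2)) x * x"
  proof -
    have "x + y - 1 - (x - 1) = y" "Suc (x - 1) = x"
      using assms by auto
    then show ?thesis
      using pmf_binomial_pmf_Suc_mult[of "1/2" "x + y - 1" "x - 1"] by (simp del: pmf_binomial)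
  qed
  then show ?thesis
    unfolding pmf_P_pmf[OF assms(1)] pmf_Q_pmf[OF assms(2)] pmf_AC_pmf by (metis mult.assoc)
qed

lemma mem_loss_bounded_PQ:
  fixes \<alpha> \<epsilon> :: real
  assumes "x \<ge> 1" "y \<ge> 1" "(x, y) \<in> set_pmf (P_pmf n p) \<union> set_pmf (Q_pmf n p)"
    and "x \<le> \<alpha> * y" "y \<le> \<alpha> * x" "\<alpha> \<le> exp \<epsilon>"
  shows "(x, y) \<in> loss_bounded \<epsilon> (P_pmf n p) (Q_pmf n p)"
proof -
  define P Q where "P = pmf (P_pmf n p) (x, y)" and "Q = pmf (Q_pmf n p) (x, y)"
  have PQ: "P * y = Q * x"
    unfolding P_def Q_def using assms(1,2) by (rule pmf_P_pmf_mult_eq_pmf_Q_pmf_mult)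
  have "P * y > 0 \<longleftrightarrow> P > 0" "Q * x > 0 \<longleftrightarrow> Q > 0"
    using assms(1,2) by (simp_all add: zero_less_mult_iff)
  moreover have "P > 0 \<or> Q > 0"
    using assms(3) by (auto simp: P_def Q_def pmf_positive)
  ultimately have "P > 0" "Q > 0"
    using PQ by auto
  have xy: "x \<le> exp \<epsilon> * y" and yx: "y \<le> exp \<epsilon> * x"
    using assms(4-6) mult_right_mono[OF assms(6), of x] mult_right_mono[OF assms(6), of y] by simp_all
  have "P * y \<le> exp \<epsilon> * Q * y"
    using PQ mult_left_mono[OF xy, of Q] \<open>Q > 0\<close> by (simp add: ac_simps)
  moreover have "Q * x \<le> exp \<epsilon> * P * x"
    using PQ mult_left_mono[OF yx, of P] \<open>P > 0\<close> by (simp add: ac_simps)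
  ultimately have "P \<le> exp \<epsilon> * Q" "Q \<le> exp \<epsilon> * P"
    using assms(1,2) by simp_all
  with \<open>P > 0\<close> \<open>Q > 0\<close> show ?thesis
    unfolding mem_loss_bounded_iff P_def Q_def by simp
qed

(* (a, c) records a heads among c coins; the two inequalities make both outputs
   (a + 1, c - a) of P and (a, c - a + 1) of Q have coordinate ratio within [1 / \<alpha>, \<alpha>]. *)
definition balanced_splits :: "real \<Rightarrow> (nat \<times> nat) set" where
  "balanced_splits \<alpha> =
    {(a, c). real a + 1 \<le> \<alpha> * (real c - real a) \<and> real c - real a + 1 \<le> \<alpha> * real a}"

lemma prob_AC_pmf_balanced_splits_le_P_pmf:
  assumes "1 \<le> \<alpha>" "\<alpha> \<le> exp \<epsilon>"
  shows "measure_pmf.prob (AC_pmf n p) (balanced_splits \<alpha>) \<le>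
    measure_pmf.prob (P_pmf n p) (loss_bounded \<epsilon> (P_pmf n p) (Q_pmf n p))"
proof -
  let ?f = "\<lambda>(a, c). (a + 1, c - a) :: nat \<times> nat"
  have "measure_pmf.prob (AC_pmf n p) (balanced_splits \<alpha>) \<le>
      measure_pmf.prob (map_pmf ?f (AC_pmf n p)) (loss_bounded \<epsilon> (P_pmf n p) (Q_pmf n p))"
  proof (rule measure_pmf_prob_le_map_pmf, safe)
    fix a c
    assume bal: "(a, c) \<in> balanced_splits \<alpha>" and supp: "(a, c) \<in> set_pmf (AC_pmf n p)"
    have "a \<le> c"
      using subsetD[OF set_pmf_AC_pmf supp] by simp
    have bal1: "real a + 1 \<le> \<alpha> * (real c - a)" and bal2: "real c - a + 1 \<le> \<alpha> * a"
      using bal by (auto simp: balanced_splits_def)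
    then have "0 < \<alpha> * (real c - a)"
      by linarith
    then have "c - a \<ge> 1" and ca: "real (c - a) = real c - a"
      using assms(1) \<open>a \<le> c\<close> by (auto simp: zero_less_mult_iff)
    moreover have "(a + 1, c - a) \<in> set_pmf (P_pmf n p)"
      using supp unfolding P_pmf_def by force
    moreover have "real (a + 1) \<le> \<alpha> * real (c - a)" "real (c - a) \<le> \<alpha> * real (a + 1)"
      unfolding ca using bal1 bal2 assms(1) by (simp_all add: algebra_simps)
    ultimately show "(a + 1, c - a) \<in> loss_bounded \<epsilon> (P_pmf n p) (Q_pmf n p)"
      using assms(2) by (intro mem_loss_bounded_PQ) auto
  qed
  then show ?thesis
    unfolding P_pmf_def[symmetric] .
qed

lemma prob_AC_pmf_balanced_splits_le_Q_pmf:
  assumes "1 \<le> \<alpha>" "\<alpha> \<le> exp \<epsilon>"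
  shows "measure_pmf.prob (AC_pmf n p) (balanced_splits \<alpha>) \<le>
    measure_pmf.prob (Q_pmf n p) (loss_bounded \<epsilon> (P_pmf n p) (Q_pmf n p))"
proof -
  let ?f = "\<lambda>(a, c). (a, c - a + 1) :: nat \<times> nat"
  have "measure_pmf.prob (AC_pmf n p) (balanced_splits \<alpha>) \<le>
      measure_pmf.prob (map_pmf ?f (AC_pmf n p)) (loss_bounded \<epsilon> (P_pmf n p) (Q_pmf n p))"
  proof (rule measure_pmf_prob_le_map_pmf, safe)
    fix a c
    assume bal: "(a, c) \<in> balanced_splits \<alpha>" and supp: "(a, c) \<in> set_pmf (AC_pmf n p)"
    have "a \<le> c"
      using subsetD[OF set_pmf_AC_pmf supp] by simp
    have bal1: "real a + 1 \<le> \<alpha> * (real c - a)" and bal2: "real c - a + 1 \<le> \<alpha> * a"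
      using bal by (auto simp: balanced_splits_def)
    have ca: "real (c - a + 1) = real c - a + 1"
      using \<open>a \<le> c\<close> by auto
    have "0 < \<alpha> * a"
      using bal2 \<open>a \<le> c\<close> by linarith
    then have "a \<ge> 1"
      using assms(1) by (simp add: zero_less_mult_iff)
    moreover have "(a, c - a + 1) \<in> set_pmf (Q_pmf n p)"
      using supp unfolding Q_pmf_def by force
    moreover have "real a \<le> \<alpha> * real (c - a + 1)" "real (c - a + 1) \<le> \<alpha> * real a"
      unfolding ca distrib_left using bal1 bal2 assms(1) by simp_all
    ultimately show "(a, c - a + 1) \<in> loss_bounded \<epsilon> (P_pmf n p) (Q_pmf n p)"
      using assms(2) by (intro mem_loss_bounded_PQ) auto
  qed
  then show ?thesis
    unfolding Q_pmf_def[symmetric] .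
qed

(* \<gamma> and \<rho> are chosen so that c / 2 \<plusminus> (\<gamma> c - \<rho>) are the boundary points
   (\<alpha> c - 1) / (1 + \<alpha>) and (c + 1) / (1 + \<alpha>) of the balanced splits of c. *)
lemma deviation_if_not_balanced_splits:
  fixes \<alpha> :: real
  assumes "\<alpha> \<ge> 1" "(a, c) \<notin> balanced_splits \<alpha>"
  defines "\<gamma> \<equiv> (\<alpha> - 1) / (2 * (1 + \<alpha>))" and "\<rho> \<equiv> 1 / (1 + \<alpha>)"
  shows "\<bar>real a - c / 2\<bar> \<ge> \<gamma> * c - \<rho>"
proof -
  have pos: "2 * (1 + \<alpha>) > 0"
    using assms(1) by simp
  have "\<gamma> * c - \<rho> = ((\<alpha> - 1) * c - 2) / (2 * (1 + \<alpha>))"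
    unfolding \<gamma>_def \<rho>_def using pos by (simp add: divide_simps) (simp add: algebra_simps)
  moreover have "real a + 1 > \<alpha> * (real c - a) \<or> real c - a + 1 > \<alpha> * a"
    using assms(2) by (auto simp: balanced_splits_def)
  then have "((\<alpha> - 1) * c - 2) / (2 * (1 + \<alpha>)) < real a - c / 2 \<or>
      ((\<alpha> - 1) * c - 2) / (2 * (1 + \<alpha>)) < c / 2 - real a"
    unfolding pos_divide_less_eq[OF pos] by (simp add: algebra_simps) arith
  ultimately show ?thesis
    by arith
qed

lemma prob_AC_pmf_not_balanced_splits_le:
  fixes \<alpha> :: real
  assumes "p \<in> {0..1}" "\<alpha> \<ge> 1"
  defines "\<gamma> \<equiv> (\<alpha> - 1) / (2 * (1 + \<alpha>))" and "\<rho> \<equiv> 1 / (1 + \<alpha>)"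
  shows "measure_pmf.prob (AC_pmf n p) (- balanced_splits \<alpha>) \<le>
    2 * exp (4 * \<gamma> * \<rho>) * (1 - p + p * exp (-2 * \<gamma>\<^sup>2)) ^ (n - 1)"
proof -
  have "\<gamma> \<ge> 0" "\<rho> \<ge> 0"
    using assms(2) by (simp_all add: \<gamma>_def \<rho>_def)
  have inner: "measure_pmf.prob (map_pmf (\<lambda>a. (a, c)) (binomial_pmf c (1/2))) (- balanced_splits \<alpha>)
      \<le> 2 * exp (4 * \<gamma> * \<rho>) * exp (-2 * \<gamma>\<^sup>2) ^ c" for c
  proof -
    have "measure_pmf.prob (map_pmf (\<lambda>a. (a, c)) (binomial_pmf c (1/2))) (- balanced_splits \<alpha>)
        = measure_pmf.prob (binomial_pmf c (1/2)) {a. (a, c) \<notin> balanced_splits \<alpha>}"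
      by (simp add: vimage_def)
    also have "\<dots> \<le> measure_pmf.prob (binomial_pmf c (1/2)) {a. \<bar>real a - c * (1/2)\<bar> \<ge> \<gamma> * c - \<rho>}"
      using deviation_if_not_balanced_splits[OF assms(2)] unfolding \<gamma>_def \<rho>_def
      by (intro measure_pmf.finite_measure_mono) auto
    also have "\<dots> \<le> 2 * exp (4 * \<gamma> * \<rho> - 2 * \<gamma>\<^sup>2 * c)"
      using \<open>\<gamma> \<ge> 0\<close> \<open>\<rho> \<ge> 0\<close> by (intro prob_binomial_pmf_abs_ge_affine) auto
    also have "\<dots> = 2 * exp (4 * \<gamma> * \<rho>) * exp (-2 * \<gamma>\<^sup>2) ^ c"
      by (simp add: exp_diff exp_minus power_inverse divide_inverse flip: exp_of_nat_mult)
    finally show ?thesis .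
  qed
  have "measure_pmf.prob (AC_pmf n p) (- balanced_splits \<alpha>) \<le>
      measure_pmf.expectation (binomial_pmf (n - 1) p) (\<lambda>c. 2 * exp (4 * \<gamma> * \<rho>) * exp (-2 * \<gamma>\<^sup>2) ^ c)"
    unfolding AC_pmf_def using assms(1) inner by (intro measure_bind_pmf_le_expectation) auto
  also have "\<dots> = 2 * exp (4 * \<gamma> * \<rho>) * (1 - p + p * exp (-2 * \<gamma>\<^sup>2)) ^ (n - 1)"
    using assms(1) by (simp add: expectation_binomial_pmf_power)
  finally show ?thesis .
qed

lemma one_minus_power_le_exp:
  fixes x :: real
  assumes "x \<le> 1"
  shows "(1 - x) ^ m \<le> exp (- (m * x))"
proof -
  have "(1 - x) ^ m \<le> exp (- x) ^ m"
    using assms exp_ge_add_one_self[of "- x"] by (intro power_mono) auto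
  then show ?thesis
    by (simp add: exp_of_nat_mult[symmetric] mult.commute)
qed

lemma one_minus_exp_neg_ge:
  fixes x :: real
  assumes "0 \<le> x"
  shows "x / (1 + x) \<le> 1 - exp (- x)"
proof -
  have "exp (- x) * (1 + x) \<le> 1"
    using exp_ge_add_one_self[of x] by (simp add: exp_minus divide_simps)
  then show ?thesis
    using assms by (simp add: divide_simps algebra_simps)
qed

lemma balance_parameter_bounds:
  fixes r :: real
  assumes "0 \<le> r" "r \<le> 3/8"
  defines "\<alpha> \<equiv> 1 + 8 * r"
  defines "\<gamma> \<equiv> (\<alpha> - 1) / (2 * (1 + \<alpha>))" and "\<rho> \<equiv> 1 / (1 + \<alpha>)"
  shows "4 * \<gamma> * \<rho> \<le> 1/4" and "2 * \<gamma>\<^sup>2 \<le> 9/50" and "r\<^sup>2 * (1 + 2 * \<gamma>\<^sup>2) \<le> 2 * \<gamma>\<^sup>2"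
proof -
  define q where "q = 1 + 4 * r"
  have "q \<ge> 1"
    using assms(1) by (simp add: q_def)
  have \<gamma>: "\<gamma> = 2 * r / q" and \<rho>: "\<rho> = 1 / (2 * q)"
    using \<open>q \<ge> 1\<close> by (simp_all add: \<gamma>_def \<rho>_def \<alpha>_def q_def field_simps)
  have "16 * r \<le> q\<^sup>2"
    using zero_le_power2[of "1 - 4 * r"] by (simp add: q_def power2_eq_square algebra_simps)
  then show "4 * \<gamma> * \<rho> \<le> 1/4"
    using \<open>q \<ge> 1\<close> by (simp add: \<gamma> \<rho> power2_eq_square field_simps)
  have "\<gamma> \<le> 3/10"
    using assms \<open>q \<ge> 1\<close> by (simp add: \<gamma> q_def field_simps)
  moreover have "\<gamma> \<ge> 0"
    using assms \<open>q \<ge> 1\<close> by (simp add: \<gamma>)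
  ultimately have "\<gamma>\<^sup>2 \<le> (3/10)\<^sup>2"
    by (intro power_mono) auto
  then show "2 * \<gamma>\<^sup>2 \<le> 9/50"
    by (simp add: power2_eq_square)
  have q8: "q\<^sup>2 + 8 * r\<^sup>2 \<le> 8"
    using assms mult_mono[OF assms(2) assms(2)] by (simp add: q_def power2_eq_square algebra_simps)
  have "2 * \<gamma>\<^sup>2 = 8 * r\<^sup>2 / q\<^sup>2"
    by (simp add: \<gamma> power_divide power_mult_distrib)
  moreover have "r\<^sup>2 * (1 + 8 * r\<^sup>2 / q\<^sup>2) = r\<^sup>2 * (q\<^sup>2 + 8 * r\<^sup>2) / q\<^sup>2"
    using \<open>q \<ge> 1\<close> by (simp add: field_simps)
  moreover have "\<dots> \<le> 8 * r\<^sup>2 / q\<^sup>2"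
    using mult_left_mono[OF q8 zero_le_power2[of r]] by (intro divide_right_mono) (simp_all add: mult.commute)
  ultimately show "r\<^sup>2 * (1 + 2 * \<gamma>\<^sup>2) \<le> 2 * \<gamma>\<^sup>2"
    by simp
qed

lemma binomial_mgf_le_exp:
  fixes p L \<theta> :: real and n :: nat
  assumes "0 \<le> p" "p \<le> 1" "0 \<le> \<theta>" "\<theta> \<le> 9/50" "L * (1 + \<theta>) \<le> p * n * \<theta>"
  shows "(1 - p + p * exp (- \<theta>)) ^ (n - 1) \<le> exp (9/50 - L)"
proof -
  define u where "u = 1 - exp (- \<theta>)"
  have "0 \<le> u" "u \<le> \<theta>" "u \<le> 1"
    using assms(3) exp_ge_add_one_self[of "- \<theta>"] by (simp_all add: u_def)
  have "L \<le> p * n * (\<theta> / (1 + \<theta>))"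
    using assms(3,5) by (simp add: field_simps)
  also have "\<dots> \<le> p * n * u"
    using assms(1) by (intro mult_left_mono one_minus_exp_neg_ge[OF assms(3), folded u_def]) auto
  finally have "L \<le> p * n * u" .
  moreover have "p * n - p \<le> p * real (n - 1)"
    using assms(1) by (cases n) (simp_all add: algebra_simps)
  then have "(p * n - p) * u \<le> p * real (n - 1) * u"
    using \<open>0 \<le> u\<close> by (rule mult_right_mono)
  moreover have "p * u \<le> u"
    using assms(1,2) \<open>0 \<le> u\<close> by (intro mult_left_le_one_le)
  ultimately have "L - 9/50 \<le> real (n - 1) * (p * u)"
    using \<open>u \<le> \<theta>\<close> assms(4) by (simp add: algebra_simps)
  moreover have "(1 - p * u) ^ (n - 1) \<le> exp (- (real (n - 1) * (p * u)))"
    using assms(2) \<open>0 \<le> u\<close> \<open>u \<le> 1\<close> by (intro one_minus_power_le_exp) (simp add: mult_le_one)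
  ultimately show ?thesis
    by (simp add: u_def algebra_simps order_trans)
qed

lemma unbalanced_tail_le:
  fixes p L :: real and n :: nat
  assumes "0 \<le> p" "p \<le> 1" "0 \<le> L" "8 * L \<le> p * n"
  defines "\<alpha> \<equiv> 1 + 8 * sqrt (L / (p * n))"
  defines "\<gamma> \<equiv> (\<alpha> - 1) / (2 * (1 + \<alpha>))" and "\<rho> \<equiv> 1 / (1 + \<alpha>)"
  shows "2 * exp (4 * \<gamma> * \<rho>) * (1 - p + p * exp (-2 * \<gamma>\<^sup>2)) ^ (n - 1) \<le> 4 * exp (- L)"
proof -
  define r where "r = sqrt (L / (p * n))"
  have "0 \<le> r" and L: "L = p * n * r\<^sup>2"
    using assms by (auto simp: r_def)
  have "r\<^sup>2 \<le> (3/8)\<^sup>2"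
    using assms by (cases "p * n = 0") (auto simp: r_def field_simps power2_eq_square)
  then have "r \<le> 3/8"
    by (rule power2_le_imp_le) simp
  have \<alpha>_r: "\<alpha> = 1 + 8 * r"
    by (simp add: \<alpha>_def r_def)
  note bounds = balance_parameter_bounds[OF \<open>0 \<le> r\<close> \<open>r \<le> 3/8\<close>, folded \<alpha>_r, folded \<gamma>_def \<rho>_def]
  have "L * (1 + 2 * \<gamma>\<^sup>2) \<le> p * n * (2 * \<gamma>\<^sup>2)"
    unfolding L using mult_left_mono[OF bounds(3), of "p * n"] assms(1) by (simp add: ac_simps)
  then have tail: "(1 - p + p * exp (-2 * \<gamma>\<^sup>2)) ^ (n - 1) \<le> exp (9/50 - L)"
    using binomial_mgf_le_exp[of p "2 * \<gamma>\<^sup>2" L n] assms(1,2) bounds(2) by simp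
  have "exp (43/100 :: real) \<le> exp (ln 2)"
    using ln2_ge_two_thirds by (subst exp_le_cancel_iff) linarith
  have "2 * exp (4 * \<gamma> * \<rho>) * (1 - p + p * exp (-2 * \<gamma>\<^sup>2)) ^ (n - 1) \<le>
      2 * exp (1/4) * exp (9/50 - L)"
    using bounds(1) tail assms(1,2) by (intro mult_mono) auto
  also have "\<dots> = 2 * exp (43/100) * exp (- L)"
    by (simp flip: exp_add)
  also have "\<dots> \<le> 4 * exp (- L)"
    using \<open>exp (43/100) \<le> exp (ln 2)\<close> by simp
  finally show ?thesis .
qed

lemma prob_AC_pmf_balanced_splits_ge:
  fixes p L :: real
  assumes "0 \<le> p" "p \<le> 1" "0 \<le> L" "8 * L \<le> p * n"
  shows "measure_pmf.prob (AC_pmf n p) (balanced_splits (1 + 8 * sqrt (L / (p * n))))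
    \<ge> 1 - 4 * exp (- L)"
proof -
  have "measure_pmf.prob (AC_pmf n p) (- balanced_splits (1 + 8 * sqrt (L / (p * n))))
      \<le> 4 * exp (- L)"
    by (rule order_trans[OF prob_AC_pmf_not_balanced_splits_le unbalanced_tail_le])
      (use assms in auto)
  then show ?thesis
    using measure_pmf.prob_compl[of "balanced_splits _" "AC_pmf n p"]
    by (simp add: Compl_eq_Diff_UNIV)
qed

lemma ln_four_div_le:
  fixes \<delta> :: real
  assumes "0 < \<delta>" "\<delta> \<le> 1"
  shows "ln (4 / \<delta>) \<le> 2 * ln (2 / \<delta>)"
proof -
  have "ln (4 / \<delta>) = ln 2 + ln (2 / \<delta>)"
    using assms(1) ln_mult[of 2 "2 / \<delta>"] by simp
  moreover have "ln 2 \<le> ln (2 / \<delta>)"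
    using assms by (simp add: le_divide_eq)
  ultimately show ?thesis
    by simp
qed

theorem lemmaA1:
  fixes \<delta> p \<epsilon> :: real and n :: nat
  assumes "0 < \<delta>" "\<delta> \<le> 1" "0 \<le> p" "p \<le> 1" "n > 0"
    and "p \<ge> 16 * ln (2 / \<delta>) / real n"
    and "\<epsilon> = ln (1 + sqrt (64 * ln (4 / \<delta>)) / sqrt (p * real n) + 8 / (p * real n))"
  shows "measure_pmf.prob (P_pmf n p) (loss_bounded \<epsilon> (P_pmf n p) (Q_pmf n p)) \<ge> 1 - \<delta> \<and>
    measure_pmf.prob (Q_pmf n p) (loss_bounded \<epsilon> (P_pmf n p) (Q_pmf n p)) \<ge> 1 - \<delta> \<and>
    indist \<epsilon> \<delta> (P_pmf n p) (Q_pmf n p)"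
proof -
  define s L where "s = p * n" and "L = ln (4 / \<delta>)"
  define \<alpha> where "\<alpha> = 1 + 8 * sqrt (L / s)"
  have "0 \<le> L" "8 * L \<le> s"
    using assms(1,2,5,6) ln_four_div_le[OF assms(1,2)] by (simp_all add: L_def s_def pos_divide_le_eq)
  then have balanced: "measure_pmf.prob (AC_pmf n p) (balanced_splits \<alpha>) \<ge> 1 - \<delta>"
    using prob_AC_pmf_balanced_splits_ge[of p L n] assms(1,3,4)
    by (simp add: \<alpha>_def s_def L_def exp_minus)
  have "\<epsilon> = ln (\<alpha> + 8 / s)"
    by (simp add: assms(7) \<alpha>_def s_def L_def real_sqrt_mult real_sqrt_divide)
  moreover have "1 \<le> \<alpha>" "0 \<le> 8 / s"
    using \<open>0 \<le> L\<close> \<open>8 * L \<le> s\<close> by (simp_all add: \<alpha>_def)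
  ultimately have "\<alpha> \<le> exp \<epsilon>"
    by (simp add: add_pos_nonneg)
  have "measure_pmf.prob (P_pmf n p) (loss_bounded \<epsilon> (P_pmf n p) (Q_pmf n p)) \<ge> 1 - \<delta>"
    and "measure_pmf.prob (Q_pmf n p) (loss_bounded \<epsilon> (P_pmf n p) (Q_pmf n p)) \<ge> 1 - \<delta>"
    using balanced prob_AC_pmf_balanced_splits_le_P_pmf[OF \<open>1 \<le> \<alpha>\<close> \<open>\<alpha> \<le> exp \<epsilon>\<close>, of n p]
      prob_AC_pmf_balanced_splits_le_Q_pmf[OF \<open>1 \<le> \<alpha>\<close> \<open>\<alpha> \<le> exp \<epsilon>\<close>, of n p] by linarith+
  then show ?thesis
    using indist_if_loss_bounded by blast
qed

end
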